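(* For every finite set $S$ of states containing the distinguished blank state $\text{␣}$, there exists a 4-CAS $\mathcal{C}=(L,A,S,N_4,\{f_c\}_{c\in L\setminus A})$ with state set $S$ and four distinct cells $a_1,a_2\in A$, $b_1,b_2\in L$, together with delays $\delta_1,\delta_2\in\mathbb{Z}$, such that $\mathcal{C}$ is a channel from $a_1$ to $b_1$ with delay $\delta_1$ and a channel from $a_2$ to $b_2$ with delay $\delta_2$, and $\mathcal{C}$ crosses these two channels.
   Context: A cellular automaton with sources (CAS) is a tuple $\mathcal{C}=(L,A,S,N,\{f_c\}_{c\in L\setminus A})$ where: $L$ is a subset of a lattice (here always $\mathbb{Z}^2$), whose elements are cells; $A\subseteq L$ is the set of sources; $S$ is a finite set of states containing a distinguished blank state $\text{␣}$; $N=(n_1,\dots,n_\nu)$ is a fixed tuple of distinct neighbourhood offsets containing $0$; and for each non-source $c$, $f_c:S^\nu\times\mathbb{N}\to S$ is a transition function that does not depend on its $i$-th argument whenever $c+n_i\notin L$. A message is a function $m:\{0,1,\dots,r\}\to S\setminus\{\text{␣}\}$ with $r\in\mathbb{N}$ its length $\lambda(m)$. An input is a map $\iota$ assigning a message to each source. Configurations $C_{t,\iota}:L\to S$ ($t\in\mathbb{N}$) are defined by: $C_{0,\iota}(c)=\iota(c)(0)$ for $c\in A$ and $C_{0,\iota}(c)=\text{␣}$ for $c\notin A$ (blank-initialization, assumed throughout); and $C_{t+1,\iota}(c)=\iota(c)(t+1)$ if $c\in A$ and $t<\lambda(\iota(c))$, $C_{t+1,\iota}(c)=\text{␣}$ if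 $c\in A$ and $t\ge\lambda(\iota(c))$, and $C_{t+1,\iota}(c)=f_c(C_{t,\iota}(c+n_1),\dots,C_{t,\iota}(c+n_\nu),t+1)$ otherwise. A 4-CAS is a CAS with $L\subseteq\mathbb{Z}^2$ and $N=N_4:=((-1,0),(0,-1),(1,0),(0,1),(0,0))$. Channel: for $\delta\in\mathbb{Z}$ and cells $x,y$, $\mathcal{C}$ is a channel from $x$ to $y$ with delay $\delta$ if for all $t\in\mathbb{N}$ and all inputs $\iota$, $C_{t,\iota}(y)=C_{t-\delta,\iota}(x)$ when $t\ge\delta$ and $C_{t,\iota}(y)=\text{␣}$ when $t<\delta$. Connectedness: $L$ is connected if any two cells of $L$ are joined by a finite sequence of cells of $L$, each consecutive pair differing by an offset in $N$ (for 4-CAS: orthogonally adjacent). External boundary: viewing each cell of $\mathbb{Z}^2$ as a unit square in $\mathbb{R}^2$, a finite connected $L$ has an external boundary, a cyclic sequence $(e_0,\dots,e_{k-1})$ of unit edges such that consecutive edges $e_i,e_{i+1 \bmod k}$ meet at vertices $v_i$, the $v_i$ are distinct (a simple closed curve), each $e_i$ separates a cell $\bar e_i\in L$ from a cell not in $L$, and $L$ lies in the bounded region enclosed; it is unique up to reversal and cyclic shift. Crossing: a CAS that is a channel from $a_1$ to $b_1$ and from $a_2$ to $b_2$, for four distinct cells $a_1,a_2\in A$, $b_1,b_2\in L$, crosses these channels if (i) $L$ is connected; (ii) whenever $\bar e_i=\bar e_j\in\{a_1,a_2,b_1,b_2\}$ with $i\le j$, either $|\{\bar e_l: i\le l\le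 j\}|=1$ or $|\{\bar e_l: 0\le l\le i \text{ or } j\le l\le k-1\}|=1$; and (iii) there exist indices $\alpha<\beta<\gamma<\delta$ of boundary edges such that $(\bar e_\alpha,\bar e_\beta,\bar e_\gamma,\bar e_\delta)$ is a cyclic permutation of $(a_1,a_2,b_1,b_2)$ or of $(b_2,b_1,a_2,a_1)$. *)

theory Defs
  imports "HOL-Analysis.Analysis"
begin

type_synonym cell = "int \<times> int"

definition cadd :: "cell \<Rightarrow> cell \<Rightarrow> cell" where
  "cadd c n = (fst c + fst n, snd c + snd n)"

definition N4 :: "cell list" where
  "N4 = [(-1,0), (0,-1), (1,0), (0,1), (0,0)]"

text \<open>The transition function
  f c is applied to the tuple of neighbour states (a list of length |N|, in
  the order of N) and the time.\<close>
definition is_CAS ::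
  "'s set \<Rightarrow> 's \<Rightarrow> cell set \<Rightarrow> cell set \<Rightarrow> cell list \<Rightarrow> (cell \<Rightarrow> 's list \<Rightarrow> nat \<Rightarrow> 's) \<Rightarrow> bool" where
  "is_CAS S bl L A N f \<longleftrightarrow>
     finite S \<and> bl \<in> S \<and> A \<subseteq> L \<and> distinct N \<and> (0,0) \<in> set N \<and>
     (\<forall>c \<in> L - A. \<forall>xs t. length xs = length N \<and> set xs \<subseteq> S \<longrightarrow> f c xs t \<in> S) \<and>
     (\<forall>c \<in> L - A. \<forall>xs ys t. length xs = length N \<and> length ys = length N \<and>
        set xs \<subseteq> S \<and> set ys \<subseteq> S \<and>
        (\<forall>i < length N. cadd c (N ! i) \<in> L \<longrightarrow> xs ! i = ys ! i)
        \<longrightarrow> f c xs t = f c ys t)"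

text \<open>A message m : {0..r} -> S - {blank} is a nonempty list; its length
  lambda(m) = r is the list length minus one.  An input assigns a message to
  every source.\<close>
definition valid_input :: "'s set \<Rightarrow> 's \<Rightarrow> cell set \<Rightarrow> (cell \<Rightarrow> 's list) \<Rightarrow> bool" where
  "valid_input S bl A \<iota> \<longleftrightarrow> (\<forall>c \<in> A. \<iota> c \<noteq> [] \<and> set (\<iota> c) \<subseteq> S - {bl})"

text \<open>Configurations C_{t,iota} (blank-initialised).  Cells outside L are
  given the blank state; this value is never used by a well-formed CAS.\<close>
fun conf :: "cell set \<Rightarrow> cell set \<Rightarrow> cell list \<Rightarrow> (cell \<Rightarrow> 's list \<Rightarrow> nat \<Rightarrow> 's)
     \<Rightarrow> 's \<Rightarrow> (cell \<Rightarrow> 's list) \<Rightarrow> nat \<Rightarrow> cell \<Rightarrow> 's" where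
  "conf L A N f bl \<iota> 0 c = (if c \<in> A then \<iota> c ! 0 else bl)"
| "conf L A N f bl \<iota> (Suc t) c =
     (if c \<in> A then (if t < length (\<iota> c) - 1 then \<iota> c ! Suc t else bl)
      else if c \<in> L then f c (map (\<lambda>n. conf L A N f bl \<iota> t (cadd c n)) N) (Suc t)
      else bl)"

definition is_channel ::
  "'s set \<Rightarrow> 's \<Rightarrow> cell set \<Rightarrow> cell set \<Rightarrow> cell list \<Rightarrow> (cell \<Rightarrow> 's list \<Rightarrow> nat \<Rightarrow> 's)
     \<Rightarrow> cell \<Rightarrow> cell \<Rightarrow> int \<Rightarrow> bool" where
  "is_channel S bl L A N f x y \<delta> \<longleftrightarrow>
     (\<forall>\<iota>. valid_input S bl A \<iota> \<longrightarrow>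
        (\<forall>t::nat. conf L A N f bl \<iota> t y =
            (if int t \<ge> \<delta> then conf L A N f bl \<iota> (nat (int t - \<delta>)) x else bl)))"

definition cells_connected :: "cell set \<Rightarrow> cell list \<Rightarrow> bool" where
  "cells_connected L N \<longleftrightarrow>
     (\<forall>x \<in> L. \<forall>y \<in> L. (x, y) \<in> {(u, v). u \<in> L \<and> v \<in> L \<and> (\<exists>n \<in> set N. v = cadd u n)}\<^sup>*)"

text \<open>Geometry of the boundary.  Cell (a,b) is the unit square [a,a+1] x [b,b+1];
  lattice points are vertices; a unit edge joins two vertices at distance 1.\<close>
definition unit_step :: "cell \<Rightarrow> cell \<Rightarrow> bool" where
  "unit_step p q \<longleftrightarrow> (fst q - fst p, snd q - snd p) \<in> {(1,0), (-1,0), (0,1), (0,-1)}"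

definition edge_cells :: "cell \<Rightarrow> cell \<Rightarrow> cell \<times> cell" where
  "edge_cells p q =
     (if snd p = snd q
      then ((min (fst p) (fst q), snd p), (min (fst p) (fst q), snd p - 1))
      else ((fst p, min (snd p) (snd q)), (fst p - 1, min (snd p) (snd q))))"

text \<open>The vertex list vs = (v_0,...,v_{k-1}) describes the cyclic edge sequence
  e_i = {v_{i-1 mod k}, v_i}, so that e_i and e_{i+1} meet at v_i.\<close>
definition bprev :: "cell list \<Rightarrow> nat \<Rightarrow> cell" where
  "bprev vs i = vs ! ((i + length vs - 1) mod length vs)"

definition rpt :: "cell \<Rightarrow> real \<times> real" where
  "rpt p = (real_of_int (fst p), real_of_int (snd p))"

definition bcurve :: "cell list \<Rightarrow> (real \<times> real) set" where
  "bcurve vs = (\<Union>i < length vs. closed_segment (rpt (bprev vs i)) (rpt (vs ! i)))"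

definition open_square :: "cell \<Rightarrow> (real \<times> real) set" where
  "open_square c = {z. real_of_int (fst c) < fst z \<and> fst z < real_of_int (fst c) + 1 \<and>
                       real_of_int (snd c) < snd z \<and> snd z < real_of_int (snd c) + 1}"

definition separates :: "cell set \<Rightarrow> cell \<times> cell \<Rightarrow> bool" where
  "separates L cs \<longleftrightarrow> (fst cs \<in> L \<longleftrightarrow> snd cs \<notin> L)"

definition ebar :: "cell set \<Rightarrow> cell list \<Rightarrow> nat \<Rightarrow> cell" where
  "ebar L vs i = (let cs = edge_cells (bprev vs i) (vs ! i) in
                  if fst cs \<in> L then fst cs else snd cs)"

definition ext_boundary :: "cell set \<Rightarrow> cell list \<Rightarrow> bool" where
  "ext_boundary L vs \<longleftrightarrow>
     length vs \<ge> 3 \<and> distinct vs \<and>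
     (\<forall>i < length vs. unit_step (bprev vs i) (vs ! i) \<and>
                      separates L (edge_cells (bprev vs i) (vs ! i))) \<and>
     (\<forall>c \<in> L. open_square c \<subseteq> inside (bcurve vs))"

definition crosses :: "cell set \<Rightarrow> cell list \<Rightarrow> cell \<Rightarrow> cell \<Rightarrow> cell \<Rightarrow> cell \<Rightarrow> bool" where
  "crosses L N a1 a2 b1 b2 \<longleftrightarrow>
     finite L \<and> cells_connected L N \<and>
     (\<exists>vs. ext_boundary L vs \<and>
        (let k = length vs; e = ebar L vs in
         (\<forall>i j. i \<le> j \<and> j < k \<and> e i = e j \<and> e i \<in> {a1, a2, b1, b2} \<longrightarrow>
             card (e ` {i..j}) = 1 \<or> card (e ` ({0..i} \<union> {j..<k})) = 1) \<and>
         (\<exists>\<alpha> \<beta> \<gamma> \<delta>. \<alpha> < \<beta> \<and> \<beta> < \<gamma> \<and> \<gamma> < \<delta> \<and> \<delta> < k \<and>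
             (\<exists>r < 4. [e \<alpha>, e \<beta>, e \<gamma>, e \<delta>] = rotate r [a1, a2, b1, b2] \<or>
                      [e \<alpha>, e \<beta>, e \<gamma>, e \<delta>] = rotate r [b2, b1, a2, a1]))))"

end

theory Submission
  imports Defs
begin

(*
  The four terminals sit on the boundary of a 7 x 7 square of cells: the sources (0,2) and
  (2,0) on its left and bottom sides, the targets (6,3) and (3,6) on its right and top sides,
  so they alternate around the boundary and the two channels must meet.  Every non-source
  cell copies one neighbour, chosen by the parity of the time.  In the 2 x 2 block with
  corners (2,2) and (3,3) each cell forwards the signal of one source at even times and that
  of the other at odd times, so the two signals share these cells without interfering;
  cells that copy themselves at one parity are one-step buffers that bring both halves of a
  signal back into phase, and each target reproduces its source with delay 9.

  The correctness argument is an invariant: each wired cell holds, at times of a given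
  parity, the state a fixed source had a fixed number of steps earlier.  It is verified
  locally, one cell and one parity at a time.
*)

section \<open>Time-multiplexed wirings\<close>

type_synonym wiring = "(cell \<times> (nat \<times> nat) \<times> (cell \<times> nat) \<times> (cell \<times> nat)) list"

text \<open>An entry \<open>(c, (i, j), l\<^sub>0, l\<^sub>1)\<close> of a wiring makes the cell \<open>c\<close> copy its neighbour
  \<open>c + N4 ! i\<close> at odd times and \<open>c + N4 ! j\<close> at even times.  The label \<open>l\<^sub>p = (a, d)\<close>
  claims that at every time \<open>t \<equiv> p (mod 2)\<close> the cell holds the state the source \<open>a\<close>
  had at time \<open>t - d\<close> (blank if \<open>t < d\<close>).  Since \<open>N4 ! 4 = (0, 0)\<close>, the index 4 makes
  the cell keep its state.\<close>

definition wiring_rule :: "wiring \<Rightarrow> 's \<Rightarrow> cell \<Rightarrow> 's list \<Rightarrow> nat \<Rightarrow> 's" where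
  "wiring_rule W bl c xs t =
     (case map_of W c of Some ((i, j), _) \<Rightarrow> xs ! (if odd t then i else j) | None \<Rightarrow> bl)"

definition wired :: "wiring \<Rightarrow> cell set \<Rightarrow> cell set" where
  "wired W A = A \<union> fst ` set W"

definition wiring_label :: "wiring \<Rightarrow> cell set \<Rightarrow> cell \<Rightarrow> nat \<Rightarrow> cell \<times> nat" where
  "wiring_label W A c p =
     (if c \<in> A then (c, 0)
      else case map_of W c of Some (_, l0, l1) \<Rightarrow> if p = 0 then l0 else l1 | None \<Rightarrow> (c, 0))"

definition wiring_step_ok :: "wiring \<Rightarrow> cell set \<Rightarrow> cell \<Rightarrow> nat \<Rightarrow> nat \<Rightarrow> bool" where
  "wiring_step_ok W A c i p \<longleftrightarrow>
     (let d = cadd c (N4 ! i) in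
      d \<in> wired W A \<and>
      wiring_label W A c (1 - p) = (fst (wiring_label W A d p), Suc (snd (wiring_label W A d p))))"

definition wiring_entry_ok ::
  "cell set \<Rightarrow> cell set \<Rightarrow> wiring \<Rightarrow> cell \<times> (nat \<times> nat) \<times> (cell \<times> nat) \<times> (cell \<times> nat) \<Rightarrow> bool" where
  "wiring_entry_ok L A W e \<longleftrightarrow>
     (case e of (c, (i, j), l0, l1) \<Rightarrow>
        c \<in> L - A \<and> i < length N4 \<and> j < length N4 \<and> 1 \<le> snd l0 \<and>
        wiring_step_ok W A c i 0 \<and> wiring_step_ok W A c j 1)"

definition valid_wiring :: "cell set \<Rightarrow> cell set \<Rightarrow> wiring \<Rightarrow> bool" where
  "valid_wiring L A W \<longleftrightarrow> distinct (map fst W) \<and> list_all (wiring_entry_ok L A W) W"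

definition conf_delayed ::
  "cell set \<Rightarrow> cell set \<Rightarrow> (cell \<Rightarrow> 's list \<Rightarrow> nat \<Rightarrow> 's) \<Rightarrow> 's \<Rightarrow> (cell \<Rightarrow> 's list)
     \<Rightarrow> cell \<times> nat \<Rightarrow> nat \<Rightarrow> 's" where
  "conf_delayed L A f bl \<iota> l t = (if snd l \<le> t then conf L A N4 f bl \<iota> (t - snd l) (fst l) else bl)"

lemma wiring_entry:
  assumes "c \<in> fst ` set W" and "valid_wiring L A W"
  obtains i j l0 l1 where "map_of W c = Some ((i, j), l0, l1)"
    and "wiring_entry_ok L A W (c, (i, j), l0, l1)"
proof -
  obtain i j l0 l1 where e: "(c, (i, j), l0, l1) \<in> set W"
    using assms(1) by force
  then have "map_of W c = Some ((i, j), l0, l1)"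
    using assms(2) by (simp add: valid_wiring_def)
  moreover have "wiring_entry_ok L A W (c, (i, j), l0, l1)"
    using assms(2) e by (simp add: valid_wiring_def list_all_iff)
  ultimately show thesis by (rule that)
qed

lemma wired_cell_not_source:
  assumes "c \<in> fst ` set W" and "valid_wiring L A W"
  shows "c \<in> L - A"
proof -
  obtain i j l0 l1 where "wiring_entry_ok L A W (c, (i, j), l0, l1)"
    using assms by (rule wiring_entry)
  then show ?thesis by (simp add: wiring_entry_ok_def)
qed

lemma wiring_rule_unwired:
  assumes "c \<notin> fst ` set W"
  shows "wiring_rule W bl c xs t = bl"
proof -
  have "map_of W c = None" using assms by (simp add: map_of_eq_None_iff)
  then show ?thesis by (simp add: wiring_rule_def)
qed

lemma conf_wiring_label:
  assumes W: "valid_wiring L A W" and c: "c \<in> wired W A"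
  shows "conf L A N4 (wiring_rule W bl) bl \<iota> t c =
           conf_delayed L A (wiring_rule W bl) bl \<iota> (wiring_label W A c (t mod 2)) t"
  using c
proof (induction t arbitrary: c)
  case 0
  then show ?case
  proof (cases "c \<in> A")
    case False
    with "0.prems" have "c \<in> fst ` set W" by (simp add: wired_def)
    then obtain i j l0 l1 where "map_of W c = Some ((i, j), l0, l1)"
      and "wiring_entry_ok L A W (c, (i, j), l0, l1)"
      using W by (rule wiring_entry)
    with False show ?thesis
      by (simp add: conf_delayed_def wiring_label_def wiring_entry_ok_def)
  qed (simp add: conf_delayed_def wiring_label_def)
next
  case (Suc t)
  show ?case
  proof (cases "c \<in> A")
    case False
    with Suc.prems have c: "c \<in> fst ` set W" by (simp add: wired_def)
    obtain i j l0 l1 where m: "map_of W c = Some ((i, j), l0, l1)"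
      and ok: "wiring_entry_ok L A W (c, (i, j), l0, l1)"
      using c W by (rule wiring_entry)
    define k where "k = (if odd (Suc t) then i else j)"
    define d where "d = cadd c (N4 ! k)"
    have "wiring_step_ok W A c k (t mod 2)" and k: "k < length N4"
      using ok by (auto simp: k_def wiring_entry_ok_def elim: oddE)
    then have d: "d \<in> wired W A"
      and lbl: "wiring_label W A c (Suc t mod 2) =
                  (fst (wiring_label W A d (t mod 2)), Suc (snd (wiring_label W A d (t mod 2))))"
      by (auto simp: wiring_step_ok_def d_def Let_def mod_Suc)
    have "conf L A N4 (wiring_rule W bl) bl \<iota> (Suc t) c = conf L A N4 (wiring_rule W bl) bl \<iota> t d"
      using wired_cell_not_source[OF c W] m k by (simp add: wiring_rule_def k_def d_def)
    also have "\<dots> = conf_delayed L A (wiring_rule W bl) bl \<iota> (wiring_label W A d (t mod 2)) t"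
      using Suc.IH[OF d] .
    also have "\<dots> = conf_delayed L A (wiring_rule W bl) bl \<iota> (wiring_label W A c (Suc t mod 2)) (Suc t)"
      by (simp add: lbl conf_delayed_def)
    finally show ?thesis .
  qed (simp add: conf_delayed_def wiring_label_def)
qed

lemma is_channel_wiring:
  assumes W: "valid_wiring L A W" and b: "b \<in> fst ` set W"
    and lbl: "\<And>p. wiring_label W A b p = (a, d)"
  shows "is_channel S bl L A N4 (wiring_rule W bl) a b (int d)"
  unfolding is_channel_def
proof (intro allI impI)
  fix \<iota> t
  have "conf L A N4 (wiring_rule W bl) bl \<iota> t b = conf_delayed L A (wiring_rule W bl) bl \<iota> (a, d) t"
    using conf_wiring_label[OF W, of b] b lbl by (simp add: wired_def)
  then show "conf L A N4 (wiring_rule W bl) bl \<iota> t b =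
      (if int d \<le> int t then conf L A N4 (wiring_rule W bl) bl \<iota> (nat (int t - int d)) a else bl)"
    by (simp add: conf_delayed_def nat_diff_distrib)
qed

lemma is_CAS_wiring:
  assumes "finite S" and "bl \<in> S" and A: "A \<subseteq> L" and W: "valid_wiring L A W"
  shows "is_CAS S bl L A N4 (wiring_rule W bl)"
  unfolding is_CAS_def
proof (intro conjI ballI allI impI)
  fix c xs t assume xs: "length xs = length N4 \<and> set xs \<subseteq> S"
  show "wiring_rule W bl c xs t \<in> S"
  proof (cases "c \<in> fst ` set W")
    case True
    then obtain i j l0 l1 where "map_of W c = Some ((i, j), l0, l1)"
      and "wiring_entry_ok L A W (c, (i, j), l0, l1)"
      using W by (rule wiring_entry)
    with xs show ?thesis
      by (auto simp: wiring_rule_def wiring_entry_ok_def intro!: subsetD[OF _ nth_mem])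
  qed (simp add: wiring_rule_unwired \<open>bl \<in> S\<close>)
next
  fix c xs ys t
  assume h: "length xs = length N4 \<and> length ys = length N4 \<and> set xs \<subseteq> S \<and> set ys \<subseteq> S \<and>
    (\<forall>i < length N4. cadd c (N4 ! i) \<in> L \<longrightarrow> xs ! i = ys ! i)"
  show "wiring_rule W bl c xs t = wiring_rule W bl c ys t"
  proof (cases "c \<in> fst ` set W")
    case True
    then obtain i j l0 l1 where m: "map_of W c = Some ((i, j), l0, l1)"
      and ok: "wiring_entry_ok L A W (c, (i, j), l0, l1)"
      using W by (rule wiring_entry)
    define k where "k = (if odd t then i else j)"
    have "wiring_step_ok W A c k 0 \<or> wiring_step_ok W A c k 1" and k: "k < length N4"
      using ok by (auto simp: k_def wiring_entry_ok_def)
    then have "cadd c (N4 ! k) \<in> wired W A"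
      by (auto simp: wiring_step_ok_def Let_def)
    then have "cadd c (N4 ! k) \<in> L"
      using A wired_cell_not_source[OF _ W] unfolding wired_def by blast
    with h k have "xs ! k = ys ! k" by blast
    with m show ?thesis by (simp add: wiring_rule_def k_def)
  qed (simp add: wiring_rule_unwired)
qed (use assms in \<open>simp_all add: N4_def\<close>)

section \<open>The square grid and its boundary curve\<close>

lemma closed_segment_horizontal:
  fixes a b x y :: real
  assumes "a \<le> x" and "x \<le> b"
  shows "(x, y) \<in> closed_segment (a, y) (b, y)"
proof -
  have "x \<in> closed_segment a b"
    using assms by (simp add: closed_segment_eq_real_ivl)
  then obtain u where "0 \<le> u" "u \<le> 1" "x = (1 - u) * a + u * b"
    by (auto simp: in_segment)
  then show ?thesis
    unfolding in_segment by (intro exI[of _ u]) (simp add: algebra_simps)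
qed

lemma closed_segment_vertical:
  fixes a b x y :: real
  assumes "a \<le> y" and "y \<le> b"
  shows "(x, y) \<in> closed_segment (x, a) (x, b)"
proof -
  have "y \<in> closed_segment a b"
    using assms by (simp add: closed_segment_eq_real_ivl)
  then obtain u where "0 \<le> u" "u \<le> 1" "y = (1 - u) * a + u * b"
    by (auto simp: in_segment)
  then show ?thesis
    unfolding in_segment by (intro exI[of _ u]) (simp add: algebra_simps)
qed

lemma unit_interval_cover:
  fixes x :: real
  assumes "0 \<le> x" and "x \<le> real n" and "0 < n"
  obtains k where "k < n" and "real k \<le> x" and "x \<le> real k + 1"
proof
  define k where "k = min (nat \<lfloor>x\<rfloor>) (n - 1)"
  show "k < n" using assms(3) by (simp add: k_def)
  show "real k \<le> x" using assms by (simp add: k_def min_def of_nat_diff; linarith)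
  show "x \<le> real k + 1" using assms by (simp add: k_def min_def of_nat_diff; linarith)
qed

lemma frontier_square:
  fixes a :: real
  shows "frontier ({0..a} \<times> {0..a}) =
           {0..a} \<times> {0, a} \<union> {0, a} \<times> {0..a}"
  by (auto simp: frontier_def closure_Times interior_Times closed_Times)

definition grid :: "nat \<Rightarrow> cell set" where
  "grid n = {0..<int n} \<times> {0..<int n}"

lemma cells_connected_grid: "cells_connected (grid n) N4"
proof -
  define R where "R = {(u, v). u \<in> grid n \<and> v \<in> grid n \<and> (\<exists>d \<in> set N4. v = cadd u d)}"
  have R_sym: "sym R"
    by (auto simp: sym_def R_def N4_def cadd_def)
  have row: "int x < int n \<Longrightarrow> ((0, 0), (int x, 0)) \<in> R\<^sup>*" for x
  proof (induction x)
    case (Suc x)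
    then have "((int x, 0), (int (Suc x), 0)) \<in> R"
      by (auto simp: R_def grid_def N4_def cadd_def)
    with Suc show ?case by (simp add: rtrancl_into_rtrancl)
  qed simp
  have col: "0 \<le> a \<Longrightarrow> a < int n \<Longrightarrow> int y < int n \<Longrightarrow> ((a, 0), (a, int y)) \<in> R\<^sup>*" for a y
  proof (induction y)
    case (Suc y)
    then have "((a, int y), (a, int (Suc y))) \<in> R"
      by (auto simp: R_def grid_def N4_def cadd_def)
    with Suc show ?case by (simp add: rtrancl_into_rtrancl)
  qed simp
  have origin: "((0, 0), (a, b)) \<in> R\<^sup>*" if "(a, b) \<in> grid n" for a b
  proof -
    have "0 \<le> a" "a < int n" "0 \<le> b" "b < int n"
      using that by (auto simp: grid_def)
    then show ?thesis
      using row[of "nat a"] col[of a "nat b"] by (auto intro: rtrancl_trans)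
  qed
  have "(x, y) \<in> R\<^sup>*" if "x \<in> grid n" "y \<in> grid n" for x y
  proof -
    have "(x, (0, 0)) \<in> R\<^sup>*"
      using origin that(1) sym_rtrancl[OF R_sym] by (cases x) (auto simp: sym_def)
    then show ?thesis
      using origin that(2) by (cases y) (auto intro: rtrancl_trans)
  qed
  then show ?thesis
    by (simp add: cells_connected_def R_def)
qed

lemma open_square_subset_interior_grid:
  assumes "c \<in> grid n"
  shows "open_square c \<subseteq> {0<..<real n} \<times> {0<..<real n}"
proof -
  have "0 \<le> fst c" "fst c + 1 \<le> int n" "0 \<le> snd c" "snd c + 1 \<le> int n"
    using assms by (auto simp: grid_def)
  then have "0 \<le> real_of_int (fst c)" "real_of_int (fst c) + 1 \<le> real n"
    "0 \<le> real_of_int (snd c)" "real_of_int (snd c) + 1 \<le> real n"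
    by linarith+
  then show ?thesis
    by (auto simp: open_square_def)
qed

definition square_vertex :: "nat \<Rightarrow> nat \<Rightarrow> cell" where
  "square_vertex n i =
     (if i \<le> n then (int i, 0)
      else if i \<le> 2 * n then (int n, int i - int n)
      else if i \<le> 3 * n then (3 * int n - int i, int n)
      else (0, 4 * int n - int i))"

definition square_boundary :: "nat \<Rightarrow> cell list" where
  "square_boundary n = map (square_vertex n) [0..<4 * n]"

lemma length_square_boundary [simp]: "length (square_boundary n) = 4 * n"
  by (simp add: square_boundary_def)

lemma nth_square_boundary: "i < 4 * n \<Longrightarrow> square_boundary n ! i = square_vertex n i"
  by (simp add: square_boundary_def)

lemma bprev_square_boundary:
  "i < 4 * n \<Longrightarrow> bprev (square_boundary n) i = square_vertex n (if i = 0 then 4 * n - 1 else i - 1)"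
proof -
  assume i: "i < 4 * n"
  have "(i + 4 * n - 1) mod (4 * n) = (if i = 0 then 4 * n - 1 else i - 1)"
    using i by (cases i) simp_all
  with i show ?thesis
    by (simp add: bprev_def nth_square_boundary)
qed

lemma square_vertex_on_side:
  fixes n i :: nat
  defines "z \<equiv> rpt (square_vertex n i)" and "m \<equiv> real n"
  shows "i \<le> n \<Longrightarrow> z \<in> {0..m} \<times> {0}"
    and "n \<le> i \<Longrightarrow> i \<le> 2 * n \<Longrightarrow> z \<in> {m} \<times> {0..m}"
    and "2 * n \<le> i \<Longrightarrow> i \<le> 3 * n \<Longrightarrow> z \<in> {0..m} \<times> {m}"
    and "3 * n \<le> i \<Longrightarrow> i \<le> 4 * n \<Longrightarrow> z \<in> {0} \<times> {0..m}"
  by (auto simp: z_def m_def square_vertex_def rpt_def)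

lemma square_vertex_sides:
  assumes "k \<le> n"
  shows "square_vertex n k = (int k, 0)"
    and "square_vertex n (n + k) = (int n, int k)"
    and "square_vertex n (3 * n - k) = (int k, int n)"
    and "square_vertex n (4 * n - k) = (0, int k)"
  using assms by (auto simp: square_vertex_def of_nat_diff)

lemma bcurve_square_boundary:
  "bcurve (square_boundary n) =
     (\<Union>j\<in>{1..4 * n}. closed_segment (rpt (square_vertex n (j - 1))) (rpt (square_vertex n j)))"
    (is "_ = (\<Union>j\<in>{1..4 * n}. ?E j)")
proof -
  have last: "square_vertex n (4 * n) = square_vertex n 0"
    by (simp add: square_vertex_def)
  have edge: "closed_segment (rpt (bprev (square_boundary n) i)) (rpt (square_boundary n ! i)) =
          ?E (if i = 0 then 4 * n else i)" if "i < 4 * n" for i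
    using that last by (simp add: bprev_square_boundary nth_square_boundary)
  have "bcurve (square_boundary n) = (\<Union>i<4 * n. ?E (if i = 0 then 4 * n else i))"
    unfolding bcurve_def length_square_boundary using edge by (intro SUP_cong) simp_all
  also have "\<dots> = (\<Union>j\<in>(\<lambda>i. if i = 0 then 4 * n else i) ` {..<4 * n}. ?E j)"
    by (simp only: image_image)
  also have "(\<lambda>i. if i = 0 then 4 * n else i) ` {..<4 * n} = {1..4 * n}"
  proof (intro equalityI subsetI)
    fix j assume "j \<in> {1..4 * n}"
    then show "j \<in> (\<lambda>i. if i = 0 then 4 * n else i) ` {..<4 * n}"
      by (cases "j = 4 * n") (auto intro!: image_eqI[where x = 0] image_eqI[where x = j])
  qed auto
  finally show ?thesis .
qed

lemma bcurve_subset_frontier_square: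
  "bcurve (square_boundary n) \<subseteq> frontier ({0..real n} \<times> {0..real n})"
  unfolding bcurve_square_boundary
proof (rule UN_least)
  fix j assume j: "j \<in> {1..4 * n}"
  let ?F = "frontier ({0..real n} \<times> {0..real n})"
  have on_side: "closed_segment (rpt (square_vertex n (j - 1))) (rpt (square_vertex n j)) \<subseteq> ?F"
    if "rpt (square_vertex n (j - 1)) \<in> S" "rpt (square_vertex n j) \<in> S" "convex S" "S \<subseteq> ?F"
    for S
    using closed_segment_subset[OF that(1-3)] that(4) by blast
  consider "j \<le> n" | "n < j" "j \<le> 2 * n" | "2 * n < j" "j \<le> 3 * n" | "3 * n < j"
    by linarith
  then show "closed_segment (rpt (square_vertex n (j - 1))) (rpt (square_vertex n j)) \<subseteq> ?F"
  proof cases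
    case 1
    then show ?thesis
      by (intro on_side[of "{0..real n} \<times> {0}"] square_vertex_on_side convex_Times)
         (auto simp: frontier_square)
  next
    case 2
    then show ?thesis
      by (intro on_side[of "{real n} \<times> {0..real n}"] square_vertex_on_side convex_Times)
         (auto simp: frontier_square)
  next
    case 3
    then show ?thesis
      by (intro on_side[of "{0..real n} \<times> {real n}"] square_vertex_on_side convex_Times)
         (auto simp: frontier_square)
  next
    case 4
    then show ?thesis
      using j by (intro on_side[of "{0} \<times> {0..real n}"] square_vertex_on_side convex_Times)
         (auto simp: frontier_square)
  qed
qed

lemma frontier_square_subset_bcurve:
  assumes "0 < n"
  shows "frontier ({0..real n} \<times> {0..real n}) \<subseteq> bcurve (square_boundary n)"
proof
  fix z assume "z \<in> frontier ({0..real n} \<times> {0..real n})"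
  then obtain x y where z: "z = (x, y)" and xy: "x \<in> {0..real n}" "y \<in> {0..real n}"
    and side: "y = 0 \<or> x = real n \<or> y = real n \<or> x = 0"
    by (auto simp: frontier_square)
  obtain kx where kx: "kx < n" "real kx \<le> x" "x \<le> real (Suc kx)"
    using xy(1) assms by (auto elim: unit_interval_cover)
  obtain ky where ky: "ky < n" "real ky \<le> y" "y \<le> real (Suc ky)"
    using xy(2) assms by (auto elim: unit_interval_cover)
  let ?E = "\<lambda>j. closed_segment (rpt (square_vertex n (j - 1))) (rpt (square_vertex n j))"
  have "\<exists>j\<in>{1..4 * n}. z \<in> ?E j"
    using side
  proof (elim disjE)
    assume "y = 0"
    then show ?thesis
      using kx closed_segment_horizontal[OF kx(2,3), of 0]
      by (intro bexI[of _ "Suc kx"]) (auto simp: z square_vertex_sides rpt_def)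
  next
    assume "x = real n"
    then show ?thesis
      using ky closed_segment_vertical[OF ky(2,3), of x] square_vertex_sides(2)[of "Suc ky" n]
      by (intro bexI[of _ "n + Suc ky"]) (auto simp: z square_vertex_sides rpt_def)
  next
    assume "y = real n"
    then show ?thesis
      using kx closed_segment_horizontal[OF kx(2,3), of y] square_vertex_sides(3)[of "Suc kx" n]
      by (intro bexI[of _ "3 * n - kx"])
        (auto simp: z square_vertex_sides rpt_def closed_segment_commute Suc_diff_Suc)
  next
    assume "x = 0"
    then show ?thesis
      using ky closed_segment_vertical[OF ky(2,3), of x] square_vertex_sides(4)[of "Suc ky" n]
      by (intro bexI[of _ "4 * n - ky"])
        (auto simp: z square_vertex_sides rpt_def closed_segment_commute Suc_diff_Suc)
  qed
  then show "z \<in> bcurve (square_boundary n)"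
    by (simp add: bcurve_square_boundary)
qed

lemma interior_square_subset_inside:
  assumes "0 < n"
  shows "{0<..<real n} \<times> {0<..<real n} \<subseteq> inside (bcurve (square_boundary n))"
proof -
  have "bcurve (square_boundary n) = frontier ({0..real n} \<times> {0..real n})"
    using bcurve_subset_frontier_square frontier_square_subset_bcurve[OF assms] by (rule antisym)
  then show ?thesis
    using interior_inside_frontier[of "{0..real n} \<times> {0..real n}"]
    by (simp add: interior_Times bounded_Times)
qed

section \<open>The crossing\<close>

definition crossing_sources :: "cell set" where
  "crossing_sources = {(0, 2), (2, 0)}"

definition crossing_wiring :: wiring where
  "crossing_wiring =
    [((1,2), (0,0), ((0,2),1), ((0,2),1)),
     ((2,1), (1,1), ((2,0),1), ((2,0),1)),
     ((2,2), (0,1), ((2,0),2), ((0,2),2)),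
     ((3,2), (1,0), ((0,2),3), ((2,0),4)),
     ((2,3), (1,0), ((0,2),4), ((2,0),3)),
     ((3,3), (0,1), ((2,0),5), ((0,2),5)),
     ((1,3), (4,1), ((0,2),2), ((0,2),3)),
     ((4,3), (4,0), ((0,2),6), ((0,2),7)),
     ((5,3), (4,0), ((0,2),8), ((0,2),9)),
     ((4,2), (0,4), ((0,2),5), ((0,2),4)),
     ((5,2), (4,0), ((0,2),5), ((0,2),6)),
     ((6,2), (4,0), ((0,2),7), ((0,2),8)),
     ((6,3), (0,1), ((0,2),9), ((0,2),9)),
     ((3,1), (0,4), ((2,0),3), ((2,0),2)),
     ((3,4), (1,4), ((2,0),7), ((2,0),6)),
     ((3,5), (4,1), ((2,0),7), ((2,0),8)),
     ((2,4), (4,1), ((2,0),4), ((2,0),5)),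
     ((2,5), (4,1), ((2,0),6), ((2,0),7)),
     ((2,6), (4,1), ((2,0),8), ((2,0),9)),
     ((3,6), (0,1), ((2,0),9), ((2,0),9))]"

lemma valid_crossing_wiring: "valid_wiring (grid 7) crossing_sources crossing_wiring"
  unfolding grid_def crossing_sources_def crossing_wiring_def by code_simp

lemma crossing_wiring_channels:
  "is_channel S bl (grid 7) crossing_sources N4 (wiring_rule crossing_wiring bl) (0, 2) (6, 3) 9"
  "is_channel S bl (grid 7) crossing_sources N4 (wiring_rule crossing_wiring bl) (2, 0) (3, 6) 9"
proof -
  have "is_channel S bl (grid 7) crossing_sources N4 (wiring_rule crossing_wiring bl) (0, 2) (6, 3) (int 9)"
    "is_channel S bl (grid 7) crossing_sources N4 (wiring_rule crossing_wiring bl) (2, 0) (3, 6) (int 9)"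
    by (rule is_channel_wiring[OF valid_crossing_wiring];
        simp add: crossing_wiring_def wiring_label_def crossing_sources_def)+
  then show "is_channel S bl (grid 7) crossing_sources N4 (wiring_rule crossing_wiring bl) (0, 2) (6, 3) 9"
    "is_channel S bl (grid 7) crossing_sources N4 (wiring_rule crossing_wiring bl) (2, 0) (3, 6) 9"
    by simp_all
qed

lemma distinct_square_boundary_7: "distinct (square_boundary 7)"
  by code_simp

lemma square_boundary_7_edges:
  "\<forall>i < 28. unit_step (bprev (square_boundary 7) i) (square_boundary 7 ! i) \<and>
     separates (grid 7) (edge_cells (bprev (square_boundary 7) i) (square_boundary 7 ! i))"
  unfolding grid_def by code_simp

lemma ebar_square_boundary_7_terminals:
  "ebar (grid 7) (square_boundary 7) 3 = (2, 0)"
  "ebar (grid 7) (square_boundary 7) 11 = (6, 3)"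
  "ebar (grid 7) (square_boundary 7) 18 = (3, 6)"
  "ebar (grid 7) (square_boundary 7) 26 = (0, 2)"
  unfolding grid_def by code_simp+

lemma ebar_square_boundary_7_terminal_once:
  assumes "i < 28" and "j < 28" and "ebar (grid 7) (square_boundary 7) i = ebar (grid 7) (square_boundary 7) j"
    and "ebar (grid 7) (square_boundary 7) i \<in> {(0, 2), (2, 0), (6, 3), (3, 6)}"
  shows "i = j"
proof -
  have "\<forall>i < 28. ebar (grid 7) (square_boundary 7) i \<in> {(0, 2), (2, 0), (6, 3), (3, 6)} \<longrightarrow>
          i \<in> {3, 11, 18, 26}"
    unfolding grid_def by code_simp
  with assms have "i \<in> {3, 11, 18, 26}" and "j \<in> {3, 11, 18, 26}"
    by auto
  then show ?thesis
    using assms(3) ebar_square_boundary_7_terminals by auto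
qed

lemma ext_boundary_grid_7: "ext_boundary (grid 7) (square_boundary 7)"
proof -
  have "open_square c \<subseteq> inside (bcurve (square_boundary 7))" if "c \<in> grid 7" for c
    using open_square_subset_interior_grid[OF that] interior_square_subset_inside[of 7] by simp
  then show ?thesis
    unfolding ext_boundary_def
    using distinct_square_boundary_7 square_boundary_7_edges by simp
qed

lemma crosses_grid_7: "crosses (grid 7) N4 (0, 2) (2, 0) (6, 3) (3, 6)"
proof -
  let ?e = "ebar (grid 7) (square_boundary 7)"
  show ?thesis
    unfolding crosses_def Let_def
  proof (intro conjI exI[of _ "square_boundary 7"])
    show "finite (grid 7)"
      by (simp add: grid_def)
    show "cells_connected (grid 7) N4"
      by (rule cells_connected_grid)
    show "ext_boundary (grid 7) (square_boundary 7)"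
      by (rule ext_boundary_grid_7)
    show "\<forall>i j. i \<le> j \<and> j < length (square_boundary 7) \<and> ?e i = ?e j \<and> ?e i \<in> {(0, 2), (2, 0), (6, 3), (3, 6)} \<longrightarrow>
        card (?e ` {i..j}) = 1 \<or> card (?e ` ({0..i} \<union> {j..<length (square_boundary 7)})) = 1"
    proof (intro allI impI)
      fix i j
      assume "i \<le> j \<and> j < length (square_boundary 7) \<and> ?e i = ?e j \<and> ?e i \<in> {(0, 2), (2, 0), (6, 3), (3, 6)}"
      then have "i < 28" "j < 28" "?e i = ?e j" "?e i \<in> {(0, 2), (2, 0), (6, 3), (3, 6)}"
        by auto
      then have "i = j"
        by (rule ebar_square_boundary_7_terminal_once)
      then show "card (?e ` {i..j}) = 1 \<or> card (?e ` ({0..i} \<union> {j..<length (square_boundary 7)})) = 1"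
        by simp
    qed
    show "\<exists>\<alpha> \<beta> \<gamma> \<delta>. \<alpha> < \<beta> \<and> \<beta> < \<gamma> \<and> \<gamma> < \<delta> \<and> \<delta> < length (square_boundary 7) \<and>
        (\<exists>r<4. [?e \<alpha>, ?e \<beta>, ?e \<gamma>, ?e \<delta>] = rotate r [(0, 2), (2, 0), (6, 3), (3, 6)] \<or>
                [?e \<alpha>, ?e \<beta>, ?e \<gamma>, ?e \<delta>] = rotate r [(3, 6), (6, 3), (2, 0), (0, 2)])"
      by (intro exI[of _ 3] exI[of _ 11] exI[of _ 18] exI[of _ 26] conjI exI[of _ 1])
        (simp_all add: ebar_square_boundary_7_terminals)
  qed
qed

theorem theorem1:
  fixes S :: "'s set" and bl :: 's
  assumes "finite S" and "bl \<in> S"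
  shows "\<exists>(L :: cell set) (A :: cell set) (f :: cell \<Rightarrow> 's list \<Rightarrow> nat \<Rightarrow> 's)
            a1 a2 b1 b2 (\<delta>1 :: int) (\<delta>2 :: int).
           is_CAS S bl L A N4 f \<and>
           a1 \<in> A \<and> a2 \<in> A \<and> b1 \<in> L \<and> b2 \<in> L \<and> distinct [a1, a2, b1, b2] \<and>
           is_channel S bl L A N4 f a1 b1 \<delta>1 \<and>
           is_channel S bl L A N4 f a2 b2 \<delta>2 \<and>
           crosses L N4 a1 a2 b1 b2"
proof -
  have "crossing_sources \<subseteq> grid 7"
    by (simp add: crossing_sources_def grid_def)
  with assms have "is_CAS S bl (grid 7) crossing_sources N4 (wiring_rule crossing_wiring bl)"
    using valid_crossing_wiring by (rule is_CAS_wiring)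
  then show ?thesis
    using crossing_wiring_channels crosses_grid_7
    by (intro exI conjI) (auto simp: crossing_sources_def grid_def)
qed

end
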